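(* Let $C>0$ and let $\mathcal{T}$ be a set of $C$-nice $(k,p)$-trees, no two of which are identical. Then $$\mathrm{b}_k(p)^{1/p}\geq\frac{p}{e\cdot C^2}\,|\mathcal{T}|^{1/p}.$$
   Context: A $(k,p)$-tree is a rooted plane tree (children of each node ordered left to right) with exactly $p$ leaves, each at distance exactly $k+1$ from the root. Two $(k,p)$-trees are identical if one is obtained from the other by renaming vertices while preserving the root, adjacency, and the left-to-right order of children of every node. For a rooted tree $T$, $\mathrm{Tran}(T)=\prod_{u\in V(T)}|r_u|!$, where $|r_u|$ is the number of children of $u$; $T$ is $C$-nice if $\mathrm{Tran}(T)\leq C^p$. $\mathrm{b}_k(p)$ is the number of $k$-level partitions $(T_1,\dots,T_k)$ of $[p]$ ($T_1$ a partition of $[p]$ into nonempty parts, $T_i$ a refinement of $T_{i-1}$). *)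

theory Defs
  imports Complex_Main "HOL-Library.Disjoint_Sets"
begin

text \<open>Rooted plane trees: a node with an ordered list of children.
  Structural equality is exactly "identical" (isomorphism preserving root and child order).\<close>
datatype ptree = Node "ptree list"

fun children :: "ptree \<Rightarrow> ptree list" where
  "children (Node ts) = ts"

fun nleaves :: "ptree \<Rightarrow> nat" where
  "nleaves (Node []) = 1"
| "nleaves (Node ts) = sum_list (map nleaves ts)"

fun leaves_at :: "nat \<Rightarrow> ptree \<Rightarrow> bool" where
  "leaves_at d (Node []) = (d = 0)"
| "leaves_at d (Node ts) = (0 < d \<and> (\<forall>c\<in>set ts. leaves_at (d - 1) c))"

definition kp_tree :: "nat \<Rightarrow> nat \<Rightarrow> ptree \<Rightarrow> bool" where
  "kp_tree k p t \<longleftrightarrow> nleaves t = p \<and> leaves_at (k + 1) t"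

fun tran :: "ptree \<Rightarrow> nat" where
  "tran (Node ts) = fact (length ts) * prod_list (map tran ts)"

definition C_nice :: "real \<Rightarrow> nat \<Rightarrow> ptree \<Rightarrow> bool" where
  "C_nice C p t \<longleftrightarrow> real (tran t) \<le> C ^ p"

text \<open>b_k(p): number of k-level partitions (T_1,...,T_k) of [p] = {1..p},
  T_1 a partition into nonempty parts, T_(i+1) refining T_i.
  The list index i corresponds to T_(i+1).\<close>
definition b :: "nat \<Rightarrow> nat \<Rightarrow> nat" where
  "b k p = card {Ts :: nat set set list. length Ts = k
      \<and> (\<forall>i<k. partition_on {1..p} (Ts ! i))
      \<and> (\<forall>i. Suc i < k \<longrightarrow> (\<forall>B\<in>Ts ! Suc i. \<exists>A\<in>Ts ! i. B \<subseteq> A))}"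

end

theory Submission
  imports Defs "HOL-Combinatorics.Multiset_Permutations" "HOL-Library.FuncSet"
begin

(* Label the p leaves of each tree of the family by a permutation of [p], and map the labelled
   tree to the sequence of partitions of [p] formed by the label sets below the vertices at
   depths 1, ..., k.  This is a k-level partition, and two labelled trees with the same image
   differ only by a reordering of the children at every vertex, so each fibre has at most
   Tran(T) <= C^p elements.  Hence |T| p! <= b_k(p) C^p; with p! >= (p/e)^p and C^p >= Tran(T) >= 1
   this rearranges to the claim. *)

lemma nleaves_pos: "nleaves t \<ge> 1"
proof (induction t)
  case (Node ts)
  then show ?case
    by (cases ts) (auto simp: trans_le_add1)
qed

lemma nleaves_Node: "ts \<noteq> [] \<Longrightarrow> nleaves (Node ts) = sum_list (map nleaves ts)"
  by (cases ts) auto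

lemma leaves_at_Suc_Node:
  "leaves_at (Suc d) (Node ts) \<longleftrightarrow> ts \<noteq> [] \<and> (\<forall>c\<in>set ts. leaves_at d c)"
  by (cases ts) auto

lemma leaves_at_0_iff: "leaves_at 0 t \<longleftrightarrow> t = Node []"
  by (cases t; cases "children t") auto

lemma tran_pos: "tran t \<ge> 1"
proof (induction t)
  case (Node ts)
  then have "prod_list (map tran ts) \<ge> 1"
    by (induction ts) (auto simp: one_le_mult_iff)
  then show ?case
    by (simp add: one_le_mult_iff)
qed

lemma disjoint_nth_if_distinct_concat:
  assumes "distinct (concat xss)" "i < length xss" "j < length xss" "i \<noteq> j"
  shows "set (xss ! i) \<inter> set (xss ! j) = {}"
  using assms
proof (induction xss arbitrary: i j)
  case (Cons ys yss)
  have "set (yss ! n) \<subseteq> set (concat yss)" if "n < length yss" for n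
    using that nth_mem by fastforce
  with Cons show ?case
    by (cases i; cases j) fastforce+
qed simp

lemma set_concat_nth: "set (concat xss) = (\<Union>j<length xss. set (xss ! j))"
  by (fastforce simp: in_set_conv_nth)

fun split_leaves :: "ptree list \<Rightarrow> 'a list \<Rightarrow> 'a list list" where
  "split_leaves [] xs = []"
| "split_leaves (t # ts) xs = take (nleaves t) xs # split_leaves ts (drop (nleaves t) xs)"

lemma length_split_leaves [simp]: "length (split_leaves ts xs) = length ts"
  by (induction ts arbitrary: xs) auto

lemma concat_split_leaves:
  "length xs = sum_list (map nleaves ts) \<Longrightarrow> concat (split_leaves ts xs) = xs"
  by (induction ts arbitrary: xs) auto

lemma length_split_leaves_nth:
  "length xs = sum_list (map nleaves ts) \<Longrightarrow> j < length ts \<Longrightarrow>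
    length (split_leaves ts xs ! j) = nleaves (ts ! j)"
  by (induction ts arbitrary: xs j) (auto simp: nth_Cons split: nat.splits)

text \<open>A labelling of the leaves of \<open>t\<close> is the list of their labels from left to right.\<close>
definition leaf_labelling :: "nat \<Rightarrow> ptree \<Rightarrow> 'a list \<Rightarrow> bool" where
  "leaf_labelling d t xs \<longleftrightarrow> leaves_at d t \<and> length xs = nleaves t \<and> distinct xs"

lemma leaf_labelling_Node_Suc:
  assumes "leaf_labelling (Suc d) (Node ts) xs"
  shows concat_split_leaves_labelling: "concat (split_leaves ts xs) = xs"
    and leaf_labelling_child: "j < length ts \<Longrightarrow> leaf_labelling d (ts ! j) (split_leaves ts xs ! j)"
    and disjoint_split_leaves:
      "i < length ts \<Longrightarrow> j < length ts \<Longrightarrow> i \<noteq> j \<Longrightarrow>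
        set (split_leaves ts xs ! i) \<inter> set (split_leaves ts xs ! j) = {}"
    and distinct_map_set_split_leaves: "distinct (map set (split_leaves ts xs))"
proof -
  have "ts \<noteq> []" and children: "\<forall>c\<in>set ts. leaves_at d c"
    using assms by (auto simp: leaf_labelling_def leaves_at_Suc_Node)
  then have len: "length xs = sum_list (map nleaves ts)"
    using assms by (simp add: leaf_labelling_def nleaves_Node)
  show concat: "concat (split_leaves ts xs) = xs"
    using concat_split_leaves[OF len] .
  then have dist: "distinct (concat (split_leaves ts xs))"
    using assms by (simp add: leaf_labelling_def)
  show "leaf_labelling d (ts ! j) (split_leaves ts xs ! j)" if "j < length ts" for j
    using that children length_split_leaves_nth[OF len that] dist
    by (auto simp: leaf_labelling_def distinct_concat_iff)
  show disj: "set (split_leaves ts xs ! i) \<inter> set (split_leaves ts xs ! j) = {}"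
    if "i < length ts" "j < length ts" "i \<noteq> j" for i j
    using disjoint_nth_if_distinct_concat[OF dist] that by simp
  have nonempty: "split_leaves ts xs ! j \<noteq> []" if "j < length ts" for j
    using length_split_leaves_nth[OF len that] nleaves_pos[of "ts ! j"] by auto
  show "distinct (map set (split_leaves ts xs))"
    unfolding distinct_conv_nth
    using disj nonempty by (metis inf.idem length_map length_split_leaves nth_map set_empty)
qed

text \<open>The blocks of \<open>level i t xs\<close> are the label sets of the subtrees rooted at depth \<open>i\<close>.\<close>
primrec level :: "nat \<Rightarrow> ptree \<Rightarrow> 'a list \<Rightarrow> 'a set set" where
  "level 0 t xs = {set xs}"
| "level (Suc i) t xs =
    (\<Union>j<length (children t). level i (children t ! j) (split_leaves (children t) xs ! j))"

lemma partition_on_UN_disjoint_family: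
  assumes "\<And>j. j \<in> I \<Longrightarrow> partition_on (A j) (P j)" and "disjoint_family_on A I"
  shows "partition_on (\<Union>j\<in>I. A j) (\<Union>j\<in>I. P j)"
proof (rule partition_onI)
  show "\<Union> (\<Union>j\<in>I. P j) = (\<Union>j\<in>I. A j)"
    using partition_onD1[OF assms(1)] by auto
  show "{} \<notin> (\<Union>j\<in>I. P j)"
    using partition_onD3[OF assms(1)] by auto
  fix X Y assume "X \<in> (\<Union>j\<in>I. P j)" "Y \<in> (\<Union>j\<in>I. P j)" "X \<noteq> Y"
  then obtain i j where i: "i \<in> I" "X \<in> P i" and j: "j \<in> I" "Y \<in> P j"
    by blast
  show "disjnt X Y"
  proof (cases "i = j")
    case True
    then show ?thesis
      using partition_onD2[OF assms(1)[OF i(1)]] i j \<open>X \<noteq> Y\<close> by (auto dest: pairwiseD)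
  next
    case False
    have "X \<subseteq> A i" "Y \<subseteq> A j"
      using partition_onD1[OF assms(1)] i j by auto
    moreover have "disjnt (A i) (A j)"
      using assms(2) False i(1) j(1) by (simp add: disjoint_family_on_def disjnt_def)
    ultimately show ?thesis
      by (meson disjnt_subset1 disjnt_subset2)
  qed
qed

lemma level_partition:
  "leaf_labelling d t xs \<Longrightarrow> i \<le> d \<Longrightarrow> partition_on (set xs) (level i t xs)"
proof (induction i arbitrary: d t xs)
  case 0
  then have "xs \<noteq> []"
    using nleaves_pos[of t] by (auto simp: leaf_labelling_def)
  then show ?case
    by (simp add: partition_on_space)
next
  case (Suc i)
  obtain ts where t: "t = Node ts" by (cases t)
  obtain d' where d: "d = Suc d'" using Suc.prems by (cases d) auto
  note labelling = Suc.prems(1)[unfolded t d]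
  let ?B = "\<lambda>j. set (split_leaves ts xs ! j)"
  have "partition_on (\<Union>j<length ts. ?B j) (level (Suc i) t xs)"
    unfolding t level.simps children.simps
  proof (rule partition_on_UN_disjoint_family)
    show "partition_on (?B j) (level i (ts ! j) (split_leaves ts xs ! j))" if "j \<in> {..<length ts}" for j
      using Suc.IH[OF leaf_labelling_child[OF labelling]] that Suc.prems(2) d by simp
    show "disjoint_family_on ?B {..<length ts}"
      using disjoint_split_leaves[OF labelling] by (auto simp: disjoint_family_on_def)
  qed
  moreover have "(\<Union>j<length ts. ?B j) = set xs"
    using concat_split_leaves_labelling[OF labelling]
    by (metis length_split_leaves set_concat_nth)
  ultimately show ?case by simp
qed

lemma level_refines:
  "leaf_labelling d t xs \<Longrightarrow> Suc i \<le> d \<Longrightarrow> B \<in> level (Suc i) t xs \<Longrightarrow> \<exists>A\<in>level i t xs. B \<subseteq> A"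
proof (induction i arbitrary: d t xs)
  case 0
  then show ?case
    using partition_onD1[OF level_partition[OF 0(1,2)]] by auto
next
  case (Suc i)
  obtain ts where t: "t = Node ts" by (cases t)
  obtain d' where d: "d = Suc d'" using Suc.prems by (cases d) auto
  note labelling = Suc.prems(1)[unfolded t d]
  from Suc.prems(3) obtain j where j: "j < length ts"
    and B: "B \<in> level (Suc i) (ts ! j) (split_leaves ts xs ! j)"
    by (auto simp: t)
  then obtain A where "A \<in> level i (ts ! j) (split_leaves ts xs ! j)" "B \<subseteq> A"
    using Suc.IH[OF leaf_labelling_child[OF labelling j]] Suc.prems(2) d by auto
  then show ?case
    using j by (auto simp: t)
qed

lemma level_bottom: "leaf_labelling d t xs \<Longrightarrow> level d t xs = (\<lambda>x. {x}) ` set xs"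
proof (induction d arbitrary: t xs)
  case 0
  then have "t = Node []" "length xs = 1"
    by (auto simp: leaf_labelling_def leaves_at_0_iff)
  then show ?case
    by (auto simp: length_Suc_conv)
next
  case (Suc d)
  obtain ts where t: "t = Node ts" by (cases t)
  note labelling = Suc.prems[unfolded t]
  have "level (Suc d) t xs = (\<Union>j<length ts. (\<lambda>x. {x}) ` set (split_leaves ts xs ! j))"
    using Suc.IH[OF leaf_labelling_child[OF labelling]] by (simp add: t)
  also have "\<dots> = (\<lambda>x. {x}) ` set (concat (split_leaves ts xs))"
    by (simp add: image_UN set_concat_nth del: set_concat)
  finally show ?case
    by (simp only: concat_split_leaves_labelling[OF labelling])
qed

lemma level_child:
  assumes labelling: "leaf_labelling (Suc d) (Node ts) xs" and "l \<le> d" "j < length ts"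
  shows "level l (ts ! j) (split_leaves ts xs ! j) =
    {B \<in> level (Suc l) (Node ts) xs. B \<subseteq> set (split_leaves ts xs ! j)}"
proof -
  let ?B = "\<lambda>j. set (split_leaves ts xs ! j)"
  let ?P = "\<lambda>j. level l (ts ! j) (split_leaves ts xs ! j)"
  have part: "partition_on (?B j) (?P j)" if "j < length ts" for j
    using level_partition[OF leaf_labelling_child[OF labelling that]] \<open>l \<le> d\<close> .
  have "B \<in> ?P j" if "j' < length ts" "B \<in> ?P j'" "B \<subseteq> ?B j" for j' B
  proof (cases "j' = j")
    case False
    have "B \<subseteq> ?B j'"
      using partition_onD1[OF part] that by auto
    then have "B = {}"
      using disjoint_split_leaves[OF labelling \<open>j < length ts\<close> \<open>j' < length ts\<close>] False that(3) by auto
    then show ?thesis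
      using partition_onD3[OF part[OF that(1)]] that(2) by simp
  qed (use that in simp)
  then show ?thesis
    using partition_onD1[OF part[OF \<open>j < length ts\<close>]] \<open>j < length ts\<close> by auto
qed

lemma level_Suc_0: "level (Suc 0) (Node ts) xs = set (map set (split_leaves ts xs))"
  by (fastforce simp: in_set_conv_nth image_iff)

definition level_fibre :: "nat \<Rightarrow> ptree \<Rightarrow> 'a list \<Rightarrow> (ptree \<times> 'a list) set" where
  "level_fibre d t xs =
    {(t', xs'). leaf_labelling d t' xs' \<and> (\<forall>i\<le>d. level i t' xs' = level i t xs)}"

lemma level_fibre_0: "leaf_labelling 0 t xs \<Longrightarrow> level_fibre 0 t xs = {(t, xs)}"
  by (auto simp: level_fibre_def leaf_labelling_def leaves_at_0_iff length_Suc_conv)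

lemma level_Suc_0_eq_obtains_permutation:
  assumes "leaf_labelling (Suc d) (Node ts) xs" "leaf_labelling (Suc d') (Node ts') xs'"
    and "level (Suc 0) (Node ts') xs' = level (Suc 0) (Node ts) xs"
  obtains \<sigma> where "\<sigma> permutes {..<length ts}" "length ts' = length ts"
    "\<And>j. j < length ts \<Longrightarrow> set (split_leaves ts' xs' ! j) = set (split_leaves ts xs ! \<sigma> j)"
proof -
  let ?bs = "map set (split_leaves ts xs)" and ?bs' = "map set (split_leaves ts' xs')"
  have "mset ?bs' = mset ?bs"
    using assms distinct_map_set_split_leaves set_eq_iff_mset_eq_distinct
    by (metis level_Suc_0)
  then obtain \<sigma> where \<sigma>: "\<sigma> permutes {..<length ts}" and perm: "permute_list \<sigma> ?bs = ?bs'"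
    by (metis mset_eq_permutation length_map length_split_leaves)
  have "length ts' = length ts"
    using arg_cong[OF perm, of length] by simp
  moreover have "set (split_leaves ts' xs' ! j) = set (split_leaves ts xs ! \<sigma> j)" if "j < length ts" for j
    using permute_list_nth[of \<sigma> ?bs j] \<sigma> perm that calculation permutes_in_image[OF \<sigma>] by auto
  ultimately show ?thesis
    using that \<sigma> by blast
qed

lemma child_in_level_fibre:
  assumes labelling: "leaf_labelling (Suc d) (Node ts) xs"
    and labelling': "leaf_labelling (Suc d) (Node ts') xs'"
    and levels: "\<forall>l\<le>Suc d. level l (Node ts') xs' = level l (Node ts) xs"
    and "j < length ts'" "i < length ts"
    and same_block: "set (split_leaves ts' xs' ! j) = set (split_leaves ts xs ! i)"
  shows "(ts' ! j, split_leaves ts' xs' ! j) \<in> level_fibre d (ts ! i) (split_leaves ts xs ! i)"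
proof -
  have "level l (ts' ! j) (split_leaves ts' xs' ! j) = level l (ts ! i) (split_leaves ts xs ! i)"
    if "l \<le> d" for l
    using level_child[OF labelling' that \<open>j < length ts'\<close>] level_child[OF labelling that \<open>i < length ts\<close>]
      levels that same_block by (simp del: level.simps)
  then show ?thesis
    using leaf_labelling_child[OF labelling' \<open>j < length ts'\<close>] by (simp add: level_fibre_def)
qed

definition join_children :: "nat \<Rightarrow> (nat \<Rightarrow> ptree \<times> 'a list) \<Rightarrow> ptree \<times> 'a list" where
  "join_children m z = (Node (map (fst \<circ> z) [0..<m]), concat (map (snd \<circ> z) [0..<m]))"

text \<open>Equal first levels make the label sets of the children agree up to a permutation \<open>\<sigma>\<close>;
  then the \<open>j\<close>-th child of a tree in the fibre lies in the fibre of the \<open>\<sigma> j\<close>-th child.\<close>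
lemma level_fibre_Node_subset:
  assumes labelling: "leaf_labelling (Suc d) (Node ts) xs"
  defines "m \<equiv> length ts"
  shows "level_fibre (Suc d) (Node ts) xs \<subseteq> join_children m `
    (\<Union>\<sigma>\<in>{\<sigma>. \<sigma> permutes {..<m}}.
      \<Pi>\<^sub>E j\<in>{..<m}. level_fibre d (ts ! \<sigma> j) (split_leaves ts xs ! \<sigma> j))"
proof
  fix a assume "a \<in> level_fibre (Suc d) (Node ts) xs"
  then obtain t' xs' where a: "a = (t', xs')"
    and labelling': "leaf_labelling (Suc d) t' xs'"
    and levels: "\<forall>l\<le>Suc d. level l t' xs' = level l (Node ts) xs"
    by (auto simp: level_fibre_def)
  obtain ts' where t': "t' = Node ts'" by (cases t')
  note labelling' = labelling'[unfolded t'] and levels = levels[unfolded t']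
  have "level (Suc 0) (Node ts') xs' = level (Suc 0) (Node ts) xs"
    using levels by (simp del: level.simps)
  then obtain \<sigma> where \<sigma>: "\<sigma> permutes {..<m}" and "length ts' = m"
    and same_block: "\<And>j. j < m \<Longrightarrow> set (split_leaves ts' xs' ! j) = set (split_leaves ts xs ! \<sigma> j)"
    using level_Suc_0_eq_obtains_permutation[OF labelling labelling'] unfolding m_def by blast
  define z where "z = (\<lambda>j\<in>{..<m}. (ts' ! j, split_leaves ts' xs' ! j))"
  have "z \<in> (\<Pi>\<^sub>E j\<in>{..<m}. level_fibre d (ts ! \<sigma> j) (split_leaves ts xs ! \<sigma> j))"
    using child_in_level_fibre[OF labelling labelling' levels] same_block
      permutes_in_image[OF \<sigma>] \<open>length ts' = m\<close> m_def by (auto simp: z_def)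
  moreover have "map (fst \<circ> z) [0..<m] = ts'" "map (snd \<circ> z) [0..<m] = split_leaves ts' xs'"
    using \<open>length ts' = m\<close> by (auto intro: nth_equalityI simp: z_def)
  then have "join_children m z = a"
    using concat_split_leaves_labelling[OF labelling'] by (simp add: a t' join_children_def)
  ultimately show "a \<in> join_children m ` (\<Union>\<sigma>\<in>{\<sigma>. \<sigma> permutes {..<m}}.
      \<Pi>\<^sub>E j\<in>{..<m}. level_fibre d (ts ! \<sigma> j) (split_leaves ts xs ! \<sigma> j))"
    using \<sigma> by blast
qed

lemma level_fibre_finite_card_le:
  "leaf_labelling d t xs \<Longrightarrow> finite (level_fibre d t xs) \<and> card (level_fibre d t xs) \<le> tran t"
proof (induction t arbitrary: d xs)
  case (Node ts)
  show ?case
  proof (cases d)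
    case 0
    then show ?thesis
      using level_fibre_0[OF Node.prems[unfolded 0]] tran_pos[of "Node ts"] by simp
  next
    case (Suc d')
    note labelling = Node.prems[unfolded Suc]
    define m where "m = length ts"
    define F where "F i = level_fibre d' (ts ! i) (split_leaves ts xs ! i)" for i
    define U where "U = (\<Union>\<sigma>\<in>{\<sigma>. \<sigma> permutes {..<m}}. \<Pi>\<^sub>E j\<in>{..<m}. F (\<sigma> j))"
    have IH: "finite (F i) \<and> card (F i) \<le> tran (ts ! i)" if "i < m" for i
      using Node.IH[OF nth_mem leaf_labelling_child[OF labelling]] that by (simp add: F_def m_def)
    have "finite U"
      using IH permutes_in_image[of _ "{..<m}"]
      by (auto simp: U_def finite_permutations intro!: finite_PiE)
    have "card U \<le> (\<Sum>\<sigma> | \<sigma> permutes {..<m}. card (\<Pi>\<^sub>E j\<in>{..<m}. F (\<sigma> j)))"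
      unfolding U_def by (rule card_UN_le) (simp add: finite_permutations)
    also have "\<dots> = (\<Sum>\<sigma> | \<sigma> permutes {..<m}. \<Prod>j<m. card (F (\<sigma> j)))"
      by (simp add: card_PiE)
    also have "\<dots> = (\<Sum>\<sigma> | \<sigma> permutes {..<m}. \<Prod>i<m. card (F i))"
      using prod.permute[of _ "{..<m}" "card \<circ> F"] by (intro sum.cong) auto
    also have "\<dots> = fact m * (\<Prod>i<m. card (F i))"
      by (simp add: card_permutations)
    also have "\<dots> \<le> fact m * (\<Prod>i<m. tran (ts ! i))"
      using IH by (intro mult_le_mono2 prod_mono) auto
    also have "\<dots> = tran (Node ts)"
      by (simp add: m_def prod.list_conv_set_nth lessThan_atLeast0)
    finally have "card U \<le> tran (Node ts)" .
    moreover have "level_fibre d (Node ts) xs \<subseteq> join_children m ` U"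
      using level_fibre_Node_subset[OF labelling] by (simp add: Suc U_def F_def m_def)
    ultimately show ?thesis
      using \<open>finite U\<close> by (meson card_image_le card_mono finite_imageI finite_subset le_trans)
  qed
qed

definition multilevel_partitions :: "nat \<Rightarrow> 'a set \<Rightarrow> 'a set set list set" where
  "multilevel_partitions k S = {Ps. length Ps = k
      \<and> (\<forall>i<k. partition_on S (Ps ! i))
      \<and> (\<forall>i. Suc i < k \<longrightarrow> (\<forall>B\<in>Ps ! Suc i. \<exists>A\<in>Ps ! i. B \<subseteq> A))}"

lemma b_eq_card_multilevel_partitions: "b k p = card (multilevel_partitions k {1..p})"
  unfolding b_def multilevel_partitions_def ..

lemma finite_multilevel_partitions: "finite S \<Longrightarrow> finite (multilevel_partitions k S)"
proof (rule finite_subset)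
  have "P \<subseteq> Pow S" if "partition_on S P" for P
    using partition_onD1[OF that] by blast
  then show "multilevel_partitions k S \<subseteq> {Ps. set Ps \<subseteq> Pow (Pow S) \<and> length Ps = k}"
    by (auto simp: multilevel_partitions_def in_set_conv_nth) blast
qed (simp add: finite_lists_length_eq)

definition levels :: "nat \<Rightarrow> ptree \<Rightarrow> 'a list \<Rightarrow> 'a set set list" where
  "levels k t xs = map (\<lambda>i. level (Suc i) t xs) [0..<k]"

lemma nth_levels: "i < k \<Longrightarrow> levels k t xs ! i = level (Suc i) t xs"
  by (simp add: levels_def del: level.simps)

lemma levels_in_multilevel_partitions:
  assumes "leaf_labelling (Suc k) t xs"
  shows "levels k t xs \<in> multilevel_partitions k (set xs)"
  unfolding multilevel_partitions_def
proof (intro CollectI conjI allI impI ballI)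
  show "length (levels k t xs) = k"
    by (simp add: levels_def)
  show "partition_on (set xs) (levels k t xs ! i)" if "i < k" for i
    using level_partition[OF assms] that by (simp add: nth_levels del: level.simps)
  show "\<exists>A\<in>levels k t xs ! i. B \<subseteq> A" if "Suc i < k" "B \<in> levels k t xs ! Suc i" for i B
    using level_refines[OF assms] that by (simp add: nth_levels del: level.simps)
qed

lemma levels_eq_imp_in_level_fibre:
  assumes "leaf_labelling (Suc k) t xs" "leaf_labelling (Suc k) t0 xs0"
    and "set xs = set xs0" "levels k t xs = levels k t0 xs0"
  shows "(t, xs) \<in> level_fibre (Suc k) t0 xs0"
proof -
  have "level i t xs = level i t0 xs0" if "i \<le> Suc k" for i
  proof (cases i)
    case (Suc i')
    show ?thesis
    proof (cases "i' < k")
      case True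
      then show ?thesis
        using arg_cong[OF assms(4), of "\<lambda>Ps. Ps ! i'"] Suc by (simp add: nth_levels)
    next
      case False
      then have "i = Suc k"
        using Suc that by simp
      then show ?thesis
        using level_bottom[OF assms(1)] level_bottom[OF assms(2)] assms(3) by simp
    qed
  qed (use assms(3) in simp)
  then show ?thesis
    using assms(1) by (simp add: level_fibre_def)
qed

lemma card_mult_fact_le_b:
  fixes X :: real
  assumes "finite \<T>" "X \<ge> 0"
    and trees: "\<And>t. t \<in> \<T> \<Longrightarrow> kp_tree k p t \<and> real (tran t) \<le> X"
  shows "real (card \<T> * fact p) \<le> real (b k p) * X"
proof -
  define A where "A = \<T> \<times> permutations_of_set {1..p}"
  define f where "f = (\<lambda>(t, xs). levels k t (xs :: nat list))"
  have labelling: "leaf_labelling (Suc k) t xs" "set xs = {1..p}" if "(t, xs) \<in> A" for t xs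
  proof -
    have "t \<in> \<T>" "xs \<in> permutations_of_set {1..p}"
      using that by (auto simp: A_def)
    then show "leaf_labelling (Suc k) t xs" "set xs = {1..p}"
      using trees[of t] length_finite_permutations_of_set[of xs "{1..p}"]
      by (auto simp: permutations_of_set_def leaf_labelling_def kp_tree_def)
  qed
  have "f ` A \<subseteq> multilevel_partitions k {1..p}"
  proof (rule image_subsetI)
    fix a assume "a \<in> A"
    then show "f a \<in> multilevel_partitions k {1..p}"
      using levels_in_multilevel_partitions labelling by (metis case_prod_conv f_def surj_pair)
  qed
  then have card_image: "card (f ` A) \<le> b k p"
    unfolding b_eq_card_multilevel_partitions by (simp add: card_mono finite_multilevel_partitions)
  have fibre: "real (card {a \<in> A. f a = P}) \<le> X" if image: "P \<in> f ` A" for P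
  proof -
    obtain t0 xs0 where a0: "(t0, xs0) \<in> A" and P: "P = f (t0, xs0)"
      using image by auto
    have "{a \<in> A. f a = P} \<subseteq> level_fibre (Suc k) t0 xs0"
    proof (rule subsetI)
      fix a assume "a \<in> {a \<in> A. f a = P}"
      moreover obtain t xs where "a = (t, xs)"
        by (cases a)
      ultimately have "(t, xs) \<in> A" "levels k t xs = levels k t0 xs0"
        by (simp_all add: P f_def)
      then show "a \<in> level_fibre (Suc k) t0 xs0"
        using levels_eq_imp_in_level_fibre[OF labelling(1) labelling(1)[OF a0]] labelling(2) a0
        by (simp add: \<open>a = (t, xs)\<close>)
    qed
    then have "card {a \<in> A. f a = P} \<le> tran t0"
      using level_fibre_finite_card_le[OF labelling(1)[OF a0]] card_mono le_trans by blast
    moreover have "real (tran t0) \<le> X"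
      using trees a0 by (simp add: A_def)
    ultimately show ?thesis
      by linarith
  qed
  have "finite A"
    using assms(1) by (simp add: A_def)
  then have "real (card A) = (\<Sum>P\<in>f ` A. real (card {a \<in> A. f a = P}))"
    using sum.image_gen[of A "\<lambda>_. 1 :: real" f] by simp
  also have "\<dots> \<le> real (card (f ` A)) * X"
    using sum_mono[OF fibre] by simp
  also have "\<dots> \<le> real (b k p) * X"
    using card_image \<open>X \<ge> 0\<close> by (simp add: mult_right_mono)
  finally show ?thesis
    by (simp add: A_def card_cartesian_product)
qed

lemma power_div_exp_le_fact: "(real n / exp 1) ^ n \<le> fact n"
proof -
  have sums: "(\<lambda>i. real n ^ i / fact i) sums exp (real n)"
    using exp_converges[of "real n"] by (simp add: divide_inverse_commute)
  have "real n ^ n / fact n \<le> exp (real n)"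
    using sum_le_suminf[OF sums_summable[OF sums], of "{n}"] sums_unique[OF sums] by simp
  moreover have "exp (real n) = exp 1 ^ n"
    by (simp add: exp_of_nat_mult[symmetric])
  ultimately show ?thesis
    by (simp add: power_divide divide_le_eq field_simps)
qed

lemma mult_powr_inverse_le:
  fixes N B x :: real
  assumes "p > 0" "N \<ge> 0" "x > 0" "N * x ^ p \<le> B"
  shows "x * N powr (1 / real p) \<le> B powr (1 / real p)"
proof -
  have "(N * x ^ p) powr (1 / real p) = x * N powr (1 / real p)"
    using assms(1-3) by (simp add: powr_mult powr_realpow[symmetric] powr_powr)
  moreover have "(N * x ^ p) powr (1 / real p) \<le> B powr (1 / real p)"
    using assms by (intro powr_mono2) auto
  ultimately show ?thesis
    by simp
qed

lemma mult_power_div_exp_le: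
  fixes N B C :: real
  assumes "C > 0" "1 \<le> C ^ p" "N \<ge> 0" "N * fact p \<le> B * C ^ p"
  shows "N * (real p / (exp 1 * C ^ 2)) ^ p \<le> B"
proof -
  have "0 \<le> B * C ^ p"
    using assms(3,4) by (meson fact_ge_zero mult_nonneg_nonneg order_trans)
  then have "B \<ge> 0"
    using \<open>1 \<le> C ^ p\<close> by (simp add: zero_le_mult_iff)
  have "N * (real p / (exp 1 * C ^ 2)) ^ p = N * (real p / exp 1) ^ p / (C ^ p)\<^sup>2"
    by (simp add: power_divide power_mult_distrib flip: power_mult) (simp add: mult.commute)
  also have "\<dots> \<le> N * fact p / (C ^ p)\<^sup>2"
    using power_div_exp_le_fact[of p] \<open>N \<ge> 0\<close> by (intro divide_right_mono mult_left_mono) auto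
  also have "\<dots> \<le> B * C ^ p / (C ^ p)\<^sup>2"
    using assms(4) by (intro divide_right_mono) auto
  also have "\<dots> = B / C ^ p"
    using \<open>C > 0\<close> by (simp add: power2_eq_square)
  also have "\<dots> \<le> B"
    using \<open>1 \<le> C ^ p\<close> \<open>B \<ge> 0\<close> by (simp add: divide_le_eq mult_le_cancel_left1)
  finally show ?thesis .
qed

theorem claim9p3:
  fixes C :: real and k p :: nat and \<T> :: "ptree set"
  assumes "C > 0"
    and "\<And>t. t \<in> \<T> \<Longrightarrow> kp_tree k p t \<and> C_nice C p t"
  shows "real (b k p) powr (1 / real p) \<ge> real p / (exp 1 * C ^ 2) * real (card \<T>) powr (1 / real p)"
proof (cases "p = 0 \<or> card \<T> = 0")
  case False
  then have "p > 0" "finite \<T>" "\<T> \<noteq> {}"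
    by (auto simp: card_gt_0_iff simp del: card_eq_0_iff)
  then obtain t where "t \<in> \<T>"
    by blast
  have "1 \<le> real (tran t)" "real (tran t) \<le> C ^ p"
    using tran_pos[of t] assms(2)[OF \<open>t \<in> \<T>\<close>] by (simp_all add: C_nice_def)
  then have "1 \<le> C ^ p"
    by linarith
  have "real (card \<T> * fact p) \<le> real (b k p) * C ^ p"
    using assms by (intro card_mult_fact_le_b[OF \<open>finite \<T>\<close>]) (simp_all add: C_nice_def)
  then have "real (card \<T>) * (real p / (exp 1 * C ^ 2)) ^ p \<le> real (b k p)"
    using mult_power_div_exp_le[OF \<open>C > 0\<close> \<open>1 \<le> C ^ p\<close>] by simp
  moreover have "real p / (exp 1 * C ^ 2) > 0"
    using \<open>p > 0\<close> \<open>C > 0\<close> by simp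
  ultimately show ?thesis
    using mult_powr_inverse_le[OF \<open>p > 0\<close> of_nat_0_le_iff] by blast
qed auto

end
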